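(* Let $V:\mathbb{R}^d\to[0,\infty)$ be measurable, locally bounded, not almost everywhere zero, and satisfy $\|V\|_{L^\infty(B(x,2r))}\le D\|V\|_{L^\infty(B(x,r))}$ for all $x\in\mathbb{R}^d$, $r>0$, with $D<\infty$ a constant. Then $$\frac{\rho_V(x)^{-2}}{4D}\le\|V\|_{L^\infty(B(x,\rho_V(x)))}\le\rho_V(x)^{-2}\qquad\text{for all }x\in\mathbb{R}^d.$$
   Context: For such $V$, $\rho_V(x):=\sup\{r>0: r^2\|V\|_{L^\infty(B(x,r))}\le1\}$, which is positive and finite for every $x$. $B(x,r)$ denotes the Euclidean open ball. *)

theory Defs
  imports "HOL-Analysis.Analysis" "HOL-Probability.Essential_Supremum"
begin

definition Linf_ball :: "('a::euclidean_space \<Rightarrow> real) \<Rightarrow> 'a \<Rightarrow> real \<Rightarrow> real" where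
  "Linf_ball V x r = real_of_ereal (esssup (restrict_space lebesgue (ball x r)) (\<lambda>y. ereal \<bar>V y\<bar>))"

definition rhoV :: "('a::euclidean_space \<Rightarrow> real) \<Rightarrow> 'a \<Rightarrow> real" where
  "rhoV V x = Sup {r. r > 0 \<and> r^2 * Linf_ball V x r \<le> 1}"

end

theory Submission imports Defs begin

text \<open>The set of admissible radii \<open>r\<close>, those with \<open>r\<^sup>2 \<parallel>V\<parallel>\<^sub>\<infinity>(B(x,r)) \<le> 1\<close>, is an interval
  \<open>(0,\<rho>]\<close>: it is nonempty because \<open>V\<close> is locally bounded, bounded because \<open>V\<close> is not a.e. zero,
  and downward closed because the norm grows with the radius. The endpoint \<open>\<rho>\<close> is itself
  admissible since the essential supremum over an open ball is approached by the essential
  suprema over smaller concentric balls; this is the upper bound. The radius \<open>2\<rho>\<close> is not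
  admissible, so \<open>1 < 4\<rho>\<^sup>2 \<parallel>V\<parallel>\<^sub>\<infinity>(B(x,2\<rho>)) \<le> 4\<rho>\<^sup>2 D \<parallel>V\<parallel>\<^sub>\<infinity>(B(x,\<rho>))\<close>, the lower bound.\<close>

locale radius_profile =
  fixes f :: "real \<Rightarrow> real"
  assumes mono: "\<And>r s. 0 < r \<Longrightarrow> r \<le> s \<Longrightarrow> f r \<le> f s"
    and nonneg: "\<And>r. 0 < r \<Longrightarrow> 0 \<le> f r"
    and inner_approx: "\<And>r z. 0 < r \<Longrightarrow> z < f r \<Longrightarrow> \<exists>s. 0 < s \<and> s < r \<and> z < f s"
    and bounded_near_0: "\<exists>B. \<forall>r. 0 < r \<and> r \<le> 1 \<longrightarrow> f r \<le> B"
    and somewhere_pos: "\<exists>R>0. 0 < f R"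
begin

definition admissible :: "real set" where
  "admissible = {r. 0 < r \<and> r\<^sup>2 * f r \<le> 1}"

definition critical_radius :: real where
  "critical_radius = Sup admissible"

lemma admissible_nonempty: "admissible \<noteq> {}"
proof -
  obtain B where B: "\<And>r. 0 < r \<Longrightarrow> r \<le> 1 \<Longrightarrow> f r \<le> B"
    using bounded_near_0 by blast
  have "0 \<le> B" using B[of 1] nonneg[of 1] by simp
  define r where "r = 1 / (B + 1)"
  have r: "0 < r" "r \<le> 1" using \<open>0 \<le> B\<close> by (auto simp: r_def)
  have "r\<^sup>2 * f r \<le> r * B"
    using B[OF r] nonneg[OF r(1)] r \<open>0 \<le> B\<close>
    by (simp add: power2_eq_square mult_mono mult_left_le_one_le)
  also have "\<dots> \<le> 1" using \<open>0 \<le> B\<close> by (simp add: r_def)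
  finally show ?thesis using r by (auto simp: admissible_def)
qed

lemma bdd_above_admissible: "bdd_above admissible"
proof -
  obtain R where R: "0 < R" "0 < f R" using somewhere_pos by blast
  have "r \<le> max 1 (max R (1 / f R))" if "r \<in> admissible" for r
  proof (cases "r \<le> max 1 R")
    case False
    then have "1 < r" "R < r" by auto
    have "r\<^sup>2 * f R \<le> r\<^sup>2 * f r" using mono[OF R(1)] \<open>R < r\<close> by (simp add: mult_left_mono)
    also have "\<dots> \<le> 1" using that by (simp add: admissible_def)
    finally have "r\<^sup>2 \<le> 1 / f R" using R(2) by (simp add: field_simps)
    moreover have "r \<le> r\<^sup>2" using \<open>1 < r\<close> by (simp add: power2_eq_square)
    ultimately show ?thesis by linarith
  qed auto
  then show ?thesis by (rule bdd_aboveI)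
qed

lemma critical_radius_pos: "0 < critical_radius"
proof -
  obtain r where "r \<in> admissible" using admissible_nonempty by blast
  then show ?thesis
    using cSup_upper[OF _ bdd_above_admissible] unfolding critical_radius_def admissible_def
    by fastforce
qed

lemma admissible_below_critical_radius:
  assumes "0 < t" "t < critical_radius"
  shows "t\<^sup>2 * f t \<le> 1"
proof -
  obtain r where r: "r \<in> admissible" "t < r"
    using assms(2) less_cSup_iff[OF admissible_nonempty bdd_above_admissible]
    unfolding critical_radius_def by blast
  have "t\<^sup>2 * f t \<le> r\<^sup>2 * f r"
    using r assms(1) mono[OF assms(1)] nonneg[OF assms(1)]
    by (intro mult_mono power_mono) (auto simp: admissible_def)
  with r(1) show ?thesis by (simp add: admissible_def)
qed

lemma critical_radius_admissible: "critical_radius\<^sup>2 * f critical_radius \<le> 1"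
proof (rule ccontr)
  let ?\<rho> = critical_radius
  have \<rho>: "0 < ?\<rho>" by (rule critical_radius_pos)
  assume "\<not> ?thesis"
  then have "1 / ?\<rho>\<^sup>2 < f ?\<rho>" using \<rho> by (simp add: field_simps)
  then obtain z where z: "1 / ?\<rho>\<^sup>2 < z" "z < f ?\<rho>" using dense by blast
  obtain s where s: "0 < s" "s < ?\<rho>" "z < f s" using inner_approx[OF \<rho> z(2)] by blast
  have "((\<lambda>t. t\<^sup>2 * z) \<longlongrightarrow> ?\<rho>\<^sup>2 * z) (at_left ?\<rho>)"
    by (intro tendsto_intros)
  moreover have "1 < ?\<rho>\<^sup>2 * z" using z(1) \<rho> by (simp add: field_simps)
  ultimately have "\<forall>\<^sub>F t in at_left ?\<rho>. 1 < t\<^sup>2 * z"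
    by (rule order_tendstoD(1))
  moreover have "\<forall>\<^sub>F t in at_left ?\<rho>. t \<in> {s<..<?\<rho>}"
    using s(2) by (rule eventually_at_left_real)
  ultimately have "\<forall>\<^sub>F t in at_left ?\<rho>. 1 < t\<^sup>2 * z \<and> t \<in> {s<..<?\<rho>}"
    by eventually_elim simp
  then obtain t where t: "1 < t\<^sup>2 * z" "s < t" "t < ?\<rho>"
    using eventually_happens'[OF trivial_limit_at_left_real] by auto
  have "z < f t" using s(3) mono[OF s(1) less_imp_le[OF t(2)]] by linarith
  then have "t\<^sup>2 * z < t\<^sup>2 * f t" using s(1) t(2) by simp
  with t admissible_below_critical_radius[of t] s(1) show False by simp
qed

lemma not_admissible_above_critical_radius:
  assumes "critical_radius < t"
  shows "1 < t\<^sup>2 * f t"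
  using cSup_upper[OF _ bdd_above_admissible, of t] assms critical_radius_pos
  unfolding critical_radius_def admissible_def by fastforce

end

lemma emeasure_lebesgue_ball_pos:
  fixes c :: "'a::euclidean_space"
  assumes "0 < r"
  shows "emeasure lebesgue (ball c r) \<noteq> 0"
  using content_ball_pos[OF assms, of c]
  by (simp add: emeasure_completion measure_def) (metis enn2real_0 less_irrefl)

context
  fixes V :: "'a::euclidean_space \<Rightarrow> real"
  assumes V_measurable: "V \<in> borel_measurable lebesgue"
    and V_locally_bounded: "\<And>K. compact K \<Longrightarrow> bounded (V ` K)"
begin

lemma sets_superlevel_ball: "{y \<in> ball x r. z < \<bar>V y\<bar>} \<in> sets lebesgue"
proof -
  have "{y \<in> ball x r. z < \<bar>V y\<bar>} = ball x r \<inter> {y \<in> space lebesgue. z < \<bar>V y\<bar>}" by auto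
  also have "\<dots> \<in> sets lebesgue"
  proof (rule sets.Int)
    show "{y \<in> space lebesgue. z < \<bar>V y\<bar>} \<in> sets lebesgue" using V_measurable by measurable
  qed simp
  finally show ?thesis .
qed

lemma ereal_Linf_ball:
  assumes "0 < r"
  shows "ereal (Linf_ball V x r) = esssup (restrict_space lebesgue (ball x r)) (\<lambda>y. ereal \<bar>V y\<bar>)"
    and "0 \<le> Linf_ball V x r"
proof -
  let ?M = "restrict_space lebesgue (ball x r)"
  let ?E = "esssup ?M (\<lambda>y. ereal \<bar>V y\<bar>)"
  have "emeasure ?M (space ?M) \<noteq> 0"
    using emeasure_lebesgue_ball_pos[OF assms, of x]
    by (simp add: space_restrict_space emeasure_restrict_space)
  then have "esssup ?M (\<lambda>y. 0::ereal) = 0" by (rule esssup_const)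
  moreover have "esssup ?M (\<lambda>y. 0::ereal) \<le> ?E" by (rule esssup_mono) auto
  ultimately have E_nonneg: "0 \<le> ?E" by simp
  obtain B where B: "\<forall>y\<in>cball x r. \<bar>V y\<bar> \<le> B"
    using V_locally_bounded[OF compact_cball[of x r]] unfolding bounded_iff by auto
  have "?E \<le> ereal B"
    using V_measurable B
    by (intro esssup_I AE_I2 measurable_restrict_space1) (auto simp: space_restrict_space)
  with E_nonneg have "\<bar>?E\<bar> \<noteq> \<infinity>" by auto
  then show "ereal (Linf_ball V x r) = ?E" by (simp add: Linf_ball_def ereal_real)
  show "0 \<le> Linf_ball V x r" using E_nonneg by (simp add: Linf_ball_def real_of_ereal_pos)
qed

lemma less_Linf_ball_iff:
  assumes "0 < r"
  shows "z < Linf_ball V x r \<longleftrightarrow> 0 < emeasure lebesgue {y \<in> ball x r. z < \<bar>V y\<bar>}"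
proof -
  let ?M = "restrict_space lebesgue (ball x r)"
  let ?E = "esssup ?M (\<lambda>y. ereal \<bar>V y\<bar>)"
  have meas_M: "(\<lambda>y. ereal \<bar>V y\<bar>) \<in> borel_measurable ?M"
    using V_measurable by (intro measurable_restrict_space1) measurable
  have emeasure_M: "emeasure ?M {y \<in> space ?M. c < ereal \<bar>V y\<bar>}
      = emeasure lebesgue {y \<in> ball x r. c < ereal \<bar>V y\<bar>}" for c
    using V_measurable by (subst emeasure_restrict_space) (auto simp: space_restrict_space)
  have "z < Linf_ball V x r \<longleftrightarrow> ereal z < ?E"
    using ereal_Linf_ball(1)[OF assms, of x] by (metis less_ereal.simps(1))
  also have "\<dots> \<longleftrightarrow> 0 < emeasure lebesgue {y \<in> ball x r. z < \<bar>V y\<bar>}"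
  proof
    assume "ereal z < ?E"
    from esssup_pos_measure[OF meas_M this] show "0 < emeasure lebesgue {y \<in> ball x r. z < \<bar>V y\<bar>}"
      using emeasure_M[of "ereal z"] by simp
  next
    assume pos: "0 < emeasure lebesgue {y \<in> ball x r. z < \<bar>V y\<bar>}"
    show "ereal z < ?E"
    proof (rule ccontr)
      assume "\<not> ereal z < ?E"
      then have le: "?E \<le> ereal z" by simp
      have "?E < ereal \<bar>V y\<bar>" if "z < \<bar>V y\<bar>" for y
        using order.strict_trans1[OF le, of "ereal \<bar>V y\<bar>"] that by simp
      then have "{y \<in> space ?M. z < \<bar>V y\<bar>} \<subseteq> {y \<in> space ?M. ?E < ereal \<bar>V y\<bar>}"
        by auto
      moreover have "{y \<in> space ?M. ?E < ereal \<bar>V y\<bar>} \<in> sets ?M"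
        using meas_M by measurable
      ultimately have "emeasure ?M {y \<in> space ?M. z < \<bar>V y\<bar>}
          \<le> emeasure ?M {y \<in> space ?M. ?E < ereal \<bar>V y\<bar>}"
        by (rule emeasure_mono)
      also have "\<dots> = 0" by (rule esssup_zero_measure)
      finally have "emeasure ?M {y \<in> space ?M. ereal z < ereal \<bar>V y\<bar>} = 0" by simp
      with pos emeasure_M[of "ereal z"] show False by simp
    qed
  qed
  finally show ?thesis .
qed

lemma Linf_ball_mono:
  assumes "0 < r" "r \<le> s"
  shows "Linf_ball V x r \<le> Linf_ball V x s"
proof (rule ccontr)
  assume "\<not> ?thesis"
  then have "Linf_ball V x s < Linf_ball V x r" by simp
  then obtain z where z: "Linf_ball V x s < z" "z < Linf_ball V x r" using dense by blast
  then have "0 < emeasure lebesgue {y \<in> ball x r. z < \<bar>V y\<bar>}"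
    using less_Linf_ball_iff assms by simp
  also have "\<dots> \<le> emeasure lebesgue {y \<in> ball x s. z < \<bar>V y\<bar>}"
    using assms by (intro emeasure_mono sets_superlevel_ball) auto
  finally have "z < Linf_ball V x s" using less_Linf_ball_iff assms by simp
  with z show False by simp
qed

lemma Linf_ball_le:
  assumes "0 < r" "\<And>y. y \<in> ball x r \<Longrightarrow> \<bar>V y\<bar> \<le> B"
  shows "Linf_ball V x r \<le> B"
proof (rule ccontr)
  assume "\<not> ?thesis"
  then have "0 < emeasure lebesgue {y \<in> ball x r. B < \<bar>V y\<bar>}"
    using less_Linf_ball_iff[OF assms(1)] by (simp only: not_le)
  moreover have "{y \<in> ball x r. B < \<bar>V y\<bar>} = {}" using assms(2) by force
  ultimately show False by (metis emeasure_empty less_irrefl)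
qed

lemma Linf_ball_inner_approx:
  assumes "0 < r" "z < Linf_ball V x r"
  shows "\<exists>s. 0 < s \<and> s < r \<and> z < Linf_ball V x s"
proof (rule ccontr)
  define s where "s k = r * (real k + 1) / (real k + 2)" for k :: nat
  have s: "0 < s k" "s k < r" for k
    using assms(1) by (simp add: s_def, simp add: s_def field_simps)
  assume "\<not> ?thesis"
  with s have "\<not> z < Linf_ball V x (s k)" for k by blast
  then have "{y \<in> ball x (s k). z < \<bar>V y\<bar>} \<in> null_sets lebesgue" for k
    using less_Linf_ball_iff[OF s(1)] by (intro null_setsI sets_superlevel_ball) auto
  then have null: "(\<Union>k. {y \<in> ball x (s k). z < \<bar>V y\<bar>}) \<in> null_sets lebesgue" by blast
  have "{y \<in> ball x r. z < \<bar>V y\<bar>} \<subseteq> (\<Union>k. {y \<in> ball x (s k). z < \<bar>V y\<bar>})"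
  proof clarify
    fix y assume y: "y \<in> ball x r" "z < \<bar>V y\<bar>"
    obtain k where "r / (r - dist x y) < real k" using reals_Archimedean2 by blast
    then have "dist x y < s k" using y(1) by (simp add: s_def field_simps)
    with y show "y \<in> (\<Union>k. {y \<in> ball x (s k). z < \<bar>V y\<bar>})" by auto
  qed
  then have "{y \<in> ball x r. z < \<bar>V y\<bar>} \<in> null_sets lebesgue"
    by (rule null_sets_subset[OF null sets_superlevel_ball])
  with assms less_Linf_ball_iff show False by (simp add: null_setsD1)
qed

lemma Linf_ball_somewhere_pos:
  assumes "\<not> (AE y in lebesgue. V y = 0)"
  shows "\<exists>R>0. 0 < Linf_ball V x R"
proof (rule ccontr)
  assume "\<not> ?thesis"
  then have "\<not> 0 < Linf_ball V x (real (Suc n))" for n by simp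
  then have "{y \<in> ball x (real (Suc n)). 0 < \<bar>V y\<bar>} \<in> null_sets lebesgue" for n
    using less_Linf_ball_iff[of "real (Suc n)" 0 x] by (intro null_setsI sets_superlevel_ball) auto
  then have null: "(\<Union>n. {y \<in> ball x (real (Suc n)). 0 < \<bar>V y\<bar>}) \<in> null_sets lebesgue" by blast
  have "{y \<in> space lebesgue. V y \<noteq> 0} \<subseteq> (\<Union>n. {y \<in> ball x (real (Suc n)). 0 < \<bar>V y\<bar>})"
  proof clarify
    fix y assume "V y \<noteq> 0"
    obtain n where "dist x y < real n" using reals_Archimedean2 by blast
    with \<open>V y \<noteq> 0\<close> have "y \<in> {y \<in> ball x (real (Suc n)). 0 < \<bar>V y\<bar>}" by simp
    then show "y \<in> (\<Union>n. {y \<in> ball x (real (Suc n)). 0 < \<bar>V y\<bar>})" by blast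
  qed
  then have "AE y in lebesgue. V y = 0" by (rule AE_I'[OF null])
  with assms show False by simp
qed

lemma radius_profile_Linf_ball:
  assumes "\<not> (AE y in lebesgue. V y = 0)"
  shows "radius_profile (Linf_ball V x)"
proof
  obtain B where B: "\<forall>y\<in>cball x 1. \<bar>V y\<bar> \<le> B"
    using V_locally_bounded[OF compact_cball[of x 1]] unfolding bounded_iff by auto
  show "\<exists>B. \<forall>r. 0 < r \<and> r \<le> 1 \<longrightarrow> Linf_ball V x r \<le> B"
  proof (intro exI allI impI)
    fix r :: real assume "0 < r \<and> r \<le> 1"
    with B show "Linf_ball V x r \<le> B" by (intro Linf_ball_le) auto
  qed
  show "\<exists>R>0. 0 < Linf_ball V x R" using assms by (rule Linf_ball_somewhere_pos)
qed (fact Linf_ball_mono ereal_Linf_ball(2) Linf_ball_inner_approx)+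

end

theorem mainTheorem9:
  fixes V :: "'a::euclidean_space \<Rightarrow> real" and D :: real
  assumes meas: "V \<in> borel_measurable lebesgue"
    and nonneg: "\<And>y. V y \<ge> 0"
    and locbdd: "\<And>K. compact K \<Longrightarrow> bounded (V ` K)"
    and nonzero: "\<not> (AE y in lebesgue. V y = 0)"
    and doubling: "\<And>x r. r > 0 \<Longrightarrow> Linf_ball V x (2 * r) \<le> D * Linf_ball V x r"
  shows "\<forall>x. rhoV V x powr (-2) / (4 * D) \<le> Linf_ball V x (rhoV V x)
             \<and> Linf_ball V x (rhoV V x) \<le> rhoV V x powr (-2)"
proof
  fix x
  let ?f = "Linf_ball V x"
  interpret radius_profile ?f
    using meas locbdd nonzero by (rule radius_profile_Linf_ball)
  have \<rho>: "rhoV V x = critical_radius"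
    by (simp add: rhoV_def critical_radius_def admissible_def)
  let ?\<rho> = critical_radius
  have pos: "0 < ?\<rho>" by (rule critical_radius_pos)
  have "1 < (2 * ?\<rho>)\<^sup>2 * ?f (2 * ?\<rho>)"
    using pos by (intro not_admissible_above_critical_radius) simp
  also have "\<dots> \<le> (2 * ?\<rho>)\<^sup>2 * (D * ?f ?\<rho>)"
    using doubling[OF pos] by (intro mult_left_mono) auto
  finally have doubled: "1 < 4 * D * (?\<rho>\<^sup>2 * ?f ?\<rho>)" by (simp add: power_mult_distrib mult_ac)
  moreover have "0 \<le> ?\<rho>\<^sup>2 * ?f ?\<rho>" using ereal_Linf_ball(2)[OF meas locbdd pos] by simp
  ultimately have "0 < D" by (smt (verit) mult_nonpos_nonneg)
  have "?f ?\<rho> \<le> 1 / ?\<rho>\<^sup>2"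
    using critical_radius_admissible pos by (simp add: field_simps)
  moreover have "1 / ?\<rho>\<^sup>2 / (4 * D) \<le> ?f ?\<rho>"
    using doubled \<open>0 < D\<close> pos by (simp add: field_simps)
  moreover have "?\<rho> powr (-2) = 1 / ?\<rho>\<^sup>2"
    using pos by (simp add: powr_minus powr_realpow divide_inverse)
  ultimately show "rhoV V x powr (-2) / (4 * D) \<le> ?f (rhoV V x) \<and> ?f (rhoV V x) \<le> rhoV V x powr (-2)"
    unfolding \<rho> by simp
qed

end
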